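(* Let $0<\alpha<1$ and let $u_1,u_2\in C^1[0,+\infty)$. Fix $t_0>0$ with $u_1(t_0)=u_2(t_0)$ and $u_1'(t_0)\neq u_2'(t_0)$, and define $$u(t)=\begin{cases} u_1(t), & 0\le t\le t_0,\\ u_2(t), & t>t_0,\end{cases}$$ so that $u$ is continuous on $[0,+\infty)$ and non-differentiable at $t_0$. Suppose that $u_1^{(\alpha)}(t)$ is continuous (as a function of $t$ on $(0,+\infty)$), and that $u_1^{(\alpha)}(t_0)$ exists and is finite. Then $u^{(\alpha)}(t_0)$ exists and $$u^{(\alpha)}(t_0)=u_1^{(\alpha)}(t_0).$$
   Context: For a function $f$ on $[0,+\infty)$ and $0<\alpha<1$, Jumarie's modified Riemann–Liouville fractional derivative is $$f^{(\alpha)}(t)=\frac{1}{\Gamma(1-\alpha)}\frac{\mathrm{d}}{\mathrm{d}t}\int_0^t (t-x)^{-\alpha}\bigl(f(x)-f(0)\bigr)\,\mathrm{d}x,$$ whenever the derivative exists. $C^1[0,+\infty)$ denotes the continuously differentiable functions on $[0,+\infty)$. *)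

theory Defs
  imports "HOL-Analysis.Analysis"
begin

definition jumarie_integral :: "real \<Rightarrow> (real \<Rightarrow> real) \<Rightarrow> real \<Rightarrow> real" where
  "jumarie_integral \<alpha> f t =
     (1 / Gamma (1 - \<alpha>)) * integral {0..t} (\<lambda>x. (t - x) powr (- \<alpha>) * (f x - f 0))"

definition has_jumarie_derivative :: "real \<Rightarrow> (real \<Rightarrow> real) \<Rightarrow> real \<Rightarrow> real \<Rightarrow> bool" where
  "has_jumarie_derivative \<alpha> f D t \<longleftrightarrow>
     (\<forall>s\<ge>0. (\<lambda>x. (s - x) powr (- \<alpha>) * (f x - f 0)) integrable_on {0..s}) \<and>
     ((jumarie_integral \<alpha> f) has_real_derivative D) (at t within {0..})"

end

theory Submission
  imports Defs
begin

text \<open>Write \<open>u = u\<^sub>1 + h\<close>, where \<open>h\<close> vanishes on \<open>[0, t\<^sub>0]\<close> and equals \<open>u\<^sub>2 - u\<^sub>1\<close> beyond.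
  Since \<open>u\<^sub>1(t\<^sub>0) = u\<^sub>2(t\<^sub>0)\<close> and both are \<open>C\<^sup>1\<close>, \<open>|h(x)| \<le> M (x - t\<^sub>0)\<close> to the right of \<open>t\<^sub>0\<close>, so the
  weakly singular integral of \<open>h\<close> up to \<open>y\<close> is \<open>O((y - t\<^sub>0)\<^sup>2\<^sup>-\<^sup>\<alpha>)\<close>. Its derivative at \<open>t\<^sub>0\<close> is
  therefore \<open>0\<close>, and by linearity \<open>u\<close> and \<open>u\<^sub>1\<close> have the same Jumarie derivative at \<open>t\<^sub>0\<close>,
  even though \<open>u\<close> itself is not differentiable there. The hypotheses \<open>u\<^sub>1'(t\<^sub>0) \<noteq> u\<^sub>2'(t\<^sub>0)\<close>
  and continuity of \<open>u\<^sub>1\<^sup>(\<^sup>\<alpha>\<^sup>)\<close> only describe the setting; the proof does not use them.\<close>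

lemma powr_kernel_has_integral:
  fixes a t \<alpha> :: real
  assumes "\<alpha> < 1" "a \<le> t"
  shows "((\<lambda>x. (t - x) powr (-\<alpha>)) has_integral ((t - a) powr (1 - \<alpha>) / (1 - \<alpha>))) {a..t}"
proof -
  have "((\<lambda>y. y powr (-\<alpha>)) has_integral ((t - a) powr (-\<alpha> + 1) / (-\<alpha> + 1))) {0..t-a}"
    using has_integral_powr_from_0[of "-\<alpha>" "t-a"] assms by simp
  then have "((\<lambda>y. (-y) powr (-\<alpha>)) has_integral ((t - a) powr (-\<alpha> + 1) / (-\<alpha> + 1))) {-(t-a)..-0}"
    by (rule has_integral_reflect_lemma_real)
  then have "((\<lambda>y. (-y) powr (-\<alpha>)) has_integral ((t - a) powr (-\<alpha> + 1) / (-\<alpha> + 1))) (cbox (a-t) 0)"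
    by simp
  from has_integral_affinity'[OF this, of 1 "-t"]
  show ?thesis by (simp add: algebra_simps)
qed

lemma powr_kernel_integrable:
  fixes a t \<alpha> :: real
  assumes "\<alpha> < 1"
  shows "(\<lambda>x. (t - x) powr (-\<alpha>)) integrable_on {a..t}"
  using powr_kernel_has_integral[OF assms, of a t]
  by (cases "a \<le> t") (auto simp: integrable_on_def)

lemma powr_kernel_mult_integrable:
  fixes a t \<alpha> :: real and h :: "real \<Rightarrow> real"
  assumes "\<alpha> < 1" "continuous_on {a..t} h"
  shows "(\<lambda>x. (t - x) powr (-\<alpha>) * h x) integrable_on {a..t}"
proof -
  have "(\<lambda>x. h x * (t - x) powr (-\<alpha>)) absolutely_integrable_on {a..t}"
  proof (rule absolutely_integrable_bounded_measurable_product_real)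
    show "h \<in> borel_measurable (lebesgue_on {a..t})"
      using assms(2) by (intro continuous_imp_measurable_on_sets_lebesgue) auto
    show "bounded (h ` {a..t})"
      using assms(2) by (intro compact_imp_bounded compact_continuous_image) auto
    show "(\<lambda>x. (t - x) powr (-\<alpha>)) absolutely_integrable_on {a..t}"
      by (rule nonnegative_absolutely_integrable_1[OF powr_kernel_integrable[OF assms(1)]]) auto
  qed auto
  then show ?thesis
    by (simp add: absolutely_integrable_on_def mult.commute)
qed

lemma powr_kernel_integral_abs_le:
  fixes a t \<alpha> B :: real and h :: "real \<Rightarrow> real"
  assumes "\<alpha> < 1" "a \<le> t"
    and "(\<lambda>x. (t - x) powr (-\<alpha>) * h x) integrable_on {a..t}"
    and "\<And>x. x \<in> {a..t} \<Longrightarrow> \<bar>h x\<bar> \<le> B"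
  shows "\<bar>integral {a..t} (\<lambda>x. (t - x) powr (-\<alpha>) * h x)\<bar> \<le> B * ((t - a) powr (1 - \<alpha>) / (1 - \<alpha>))"
proof -
  have kernel: "((\<lambda>x. B * (t - x) powr (-\<alpha>)) has_integral B * ((t - a) powr (1 - \<alpha>) / (1 - \<alpha>))) {a..t}"
    using powr_kernel_has_integral[OF assms(1,2)] by (rule has_integral_mult_right)
  have "norm (integral {a..t} (\<lambda>x. (t - x) powr (-\<alpha>) * h x)) \<le> integral {a..t} (\<lambda>x. B * (t - x) powr (-\<alpha>))"
  proof (rule integral_norm_bound_integral)
    fix x assume "x \<in> {a..t}"
    then show "norm ((t - x) powr (-\<alpha>) * h x) \<le> B * (t - x) powr (-\<alpha>)"
      using assms(4) by (simp add: abs_mult mult.commute mult_right_mono)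
  qed (use assms(3) kernel in auto)
  also have "\<dots> = B * ((t - a) powr (1 - \<alpha>) / (1 - \<alpha>))"
    using kernel by (rule integral_unique)
  finally show ?thesis by simp
qed

lemma jumarie_kernel_integrable:
  fixes \<alpha> s :: real and f :: "real \<Rightarrow> real"
  assumes "\<alpha> < 1" "continuous_on {0..} f"
  shows "(\<lambda>x. (s - x) powr (-\<alpha>) * (f x - f 0)) integrable_on {0..s}"
  using assms by (intro powr_kernel_mult_integrable continuous_intros) (auto intro: continuous_on_subset)

lemma jumarie_integral_add:
  fixes \<alpha> t :: real and f g :: "real \<Rightarrow> real"
  assumes "(\<lambda>x. (t - x) powr (-\<alpha>) * (f x - f 0)) integrable_on {0..t}"
    and "(\<lambda>x. (t - x) powr (-\<alpha>) * (g x - g 0)) integrable_on {0..t}"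
  shows "jumarie_integral \<alpha> (\<lambda>x. f x + g x) t = jumarie_integral \<alpha> f t + jumarie_integral \<alpha> g t"
proof -
  have "integral {0..t} (\<lambda>x. (t - x) powr (-\<alpha>) * (f x + g x - (f 0 + g 0)))
      = integral {0..t} (\<lambda>x. (t - x) powr (-\<alpha>) * (f x - f 0) + (t - x) powr (-\<alpha>) * (g x - g 0))"
    by (simp add: algebra_simps)
  also have "\<dots> = integral {0..t} (\<lambda>x. (t - x) powr (-\<alpha>) * (f x - f 0))
                + integral {0..t} (\<lambda>x. (t - x) powr (-\<alpha>) * (g x - g 0))"
    using assms by (rule integral_add)
  finally show ?thesis
    by (simp add: jumarie_integral_def distrib_left)
qed

lemma vanishing_C1_linear_bound:
  fixes a b :: real and g g' :: "real \<Rightarrow> real"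
  assumes "\<And>x. x \<in> {a..b} \<Longrightarrow> (g has_real_derivative g' x) (at x within {a..b})"
    and "continuous_on {a..b} g'" and "g a = 0"
  obtains M where "\<And>x. x \<in> {a..b} \<Longrightarrow> \<bar>g x\<bar> \<le> M * (x - a)"
proof -
  have "bounded (g' ` {a..b})"
    using assms(2) by (intro compact_imp_bounded compact_continuous_image) auto
  then obtain M where M: "\<forall>x\<in>{a..b}. \<bar>g' x\<bar> \<le> M"
    by (auto simp: bounded_real)
  have "\<bar>g x\<bar> \<le> M * (x - a)" if "x \<in> {a..b}" for x
    using field_differentiable_bound[of "{a..b}" g g' M a x] assms(1,3) M that by simp
  then show ?thesis by (rule that)
qed

lemma continuous_on_cutoff_left:
  fixes a c :: real and g :: "real \<Rightarrow> real"
  assumes "continuous_on {a..} g" "g c = 0"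
  shows "continuous_on {a..} (\<lambda>x. if x \<le> c then 0 else g x)"
proof -
  have "continuous_on {a..} (\<lambda>x. if id x \<le> c then 0 else g x)"
    by (rule continuous_on_cases_le) (use assms in \<open>auto intro: continuous_on_subset\<close>)
  then show ?thesis by simp
qed

text \<open>The kernel \<open>(y - x)\<^sup>-\<^sup>\<alpha>\<close> integrates to \<open>(y - t\<^sub>0)\<^sup>1\<^sup>-\<^sup>\<alpha> / (1 - \<alpha>)\<close> over \<open>[t\<^sub>0, y]\<close>, while \<open>h\<close> is
  \<open>O(y - t\<^sub>0)\<close> there; the product is \<open>o(y - t\<^sub>0)\<close> precisely because \<open>\<alpha> < 1\<close>.\<close>
lemma powr_kernel_integral_has_derivative_zero:
  fixes \<alpha> a t0 \<delta> M :: real and h :: "real \<Rightarrow> real"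
  assumes "\<alpha> < 1" "a \<le> t0" "0 < \<delta>"
    and "continuous_on {a..} h"
    and "\<And>x. x \<le> t0 \<Longrightarrow> h x = 0"
    and "\<And>x. x \<in> {t0..t0+\<delta>} \<Longrightarrow> \<bar>h x\<bar> \<le> M * (x - t0)"
  shows "((\<lambda>y. integral {a..y} (\<lambda>x. (y - x) powr (-\<alpha>) * h x)) has_real_derivative 0) (at t0)"
proof -
  define R where "R y = integral {a..y} (\<lambda>x. (y - x) powr (-\<alpha>) * h x)" for y
  have M: "0 \<le> M"
    using assms(3) order_trans[OF abs_ge_zero assms(6)[of "t0 + \<delta>"]] by (simp add: zero_le_mult_iff)
  have R_left: "R y = 0" if "y \<le> t0" for y
  proof -
    have "R y = integral {a..y} (\<lambda>_. 0)"
      unfolding R_def using that assms(5) by (intro integral_cong) auto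
    then show ?thesis by simp
  qed
  have R_right: "\<bar>R y\<bar> \<le> M * (y - t0) * ((y - t0) powr (1 - \<alpha>) / (1 - \<alpha>))"
    if "t0 \<le> y" "y \<le> t0 + \<delta>" for y
  proof -
    have integrable: "(\<lambda>x. (y - x) powr (-\<alpha>) * h x) integrable_on {c..y}" if "a \<le> c" for c
      using assms(1,4) that by (intro powr_kernel_mult_integrable) (auto intro: continuous_on_subset)
    have "R y = integral {a..t0} (\<lambda>x. (y - x) powr (-\<alpha>) * h x) + integral {t0..y} (\<lambda>x. (y - x) powr (-\<alpha>) * h x)"
      unfolding R_def using assms(2) that integrable[of a]
      by (intro Henstock_Kurzweil_Integration.integral_combine[symmetric]) auto
    also have "integral {a..t0} (\<lambda>x. (y - x) powr (-\<alpha>) * h x) = integral {a..t0} (\<lambda>_. 0)"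
      using assms(5) by (intro integral_cong) auto
    finally have "R y = integral {t0..y} (\<lambda>x. (y - x) powr (-\<alpha>) * h x)" by simp
    moreover have "\<bar>h x\<bar> \<le> M * (y - t0)" if "x \<in> {t0..y}" for x
      using assms(6)[of x] that \<open>y \<le> t0 + \<delta>\<close> M by (smt (verit) atLeastAtMost_iff mult_left_mono)
    ultimately show ?thesis
      using powr_kernel_integral_abs_le[OF assms(1) that(1) integrable] assms(2) by simp
  qed
  have "((\<lambda>y. R y / (y - t0)) \<longlongrightarrow> 0) (at t0)"
  proof (rule Lim_null_comparison)
    have "((\<lambda>y. \<bar>y - t0\<bar> powr (1 - \<alpha>)) \<longlongrightarrow> 0) (at t0)"
      using assms(1) by (intro tendsto_zero_powrI tendsto_rabs_zero tendsto_eq_intros) auto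
    then show "((\<lambda>y. M / (1 - \<alpha>) * \<bar>y - t0\<bar> powr (1 - \<alpha>)) \<longlongrightarrow> 0) (at t0)"
      by (rule tendsto_mult_right_zero)
    have "norm (R y / (y - t0)) \<le> M / (1 - \<alpha>) * \<bar>y - t0\<bar> powr (1 - \<alpha>)"
      if "y \<noteq> t0" "dist y t0 < \<delta>" for y
    proof (cases "y \<le> t0")
      case True
      then show ?thesis using R_left M assms(1) by simp
    next
      case False
      then have "\<bar>R y\<bar> \<le> M / (1 - \<alpha>) * (y - t0) powr (1 - \<alpha>) * (y - t0)"
        using R_right[of y] that by (simp add: dist_real_def mult_ac)
      then show ?thesis
        using False by (simp add: abs_div divide_le_eq)
    qed
    then show "\<forall>\<^sub>F y in at t0. norm (R y / (y - t0)) \<le> M / (1 - \<alpha>) * \<bar>y - t0\<bar> powr (1 - \<alpha>)"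
      unfolding eventually_at using assms(3) by blast
  qed
  then show ?thesis
    using R_left[of t0] by (simp add: has_field_derivative_iff R_def)
qed

lemma jumarie_integral_has_derivative_zero:
  fixes \<alpha> t0 \<delta> M :: real and h :: "real \<Rightarrow> real"
  assumes "\<alpha> < 1" "0 \<le> t0" "0 < \<delta>"
    and "continuous_on {0..} h"
    and "\<And>x. x \<le> t0 \<Longrightarrow> h x = 0"
    and "\<And>x. x \<in> {t0..t0+\<delta>} \<Longrightarrow> \<bar>h x\<bar> \<le> M * (x - t0)"
  shows "(jumarie_integral \<alpha> h has_real_derivative 0) (at t0)"
proof -
  have "jumarie_integral \<alpha> h
      = (\<lambda>t. 1 / Gamma (1 - \<alpha>) * integral {0..t} (\<lambda>x. (t - x) powr (-\<alpha>) * h x))"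
    using assms(5)[OF assms(2)] by (simp add: jumarie_integral_def fun_eq_iff)
  then show ?thesis
    using DERIV_cmult[OF powr_kernel_integral_has_derivative_zero[OF assms], of "1 / Gamma (1 - \<alpha>)"]
    by simp
qed

lemma has_jumarie_derivative_add:
  fixes \<alpha> D E t :: real and f g :: "real \<Rightarrow> real"
  assumes "\<alpha> < 1" "continuous_on {0..} f" "continuous_on {0..} g"
    and "has_jumarie_derivative \<alpha> f D t"
    and "(jumarie_integral \<alpha> g has_real_derivative E) (at t within {0..})"
  shows "has_jumarie_derivative \<alpha> (\<lambda>x. f x + g x) (D + E) t"
proof -
  have "jumarie_integral \<alpha> (\<lambda>x. f x + g x) = (\<lambda>s. jumarie_integral \<alpha> f s + jumarie_integral \<alpha> g s)"
    using assms(1-3) by (intro ext jumarie_integral_add jumarie_kernel_integrable)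
  moreover have "(jumarie_integral \<alpha> f has_real_derivative D) (at t within {0..})"
    using assms(4) by (simp add: has_jumarie_derivative_def)
  ultimately have "(jumarie_integral \<alpha> (\<lambda>x. f x + g x) has_real_derivative D + E) (at t within {0..})"
    using DERIV_add[OF _ assms(5)] by simp
  moreover have "(\<lambda>x. (s - x) powr (-\<alpha>) * (f x + g x - (f 0 + g 0))) integrable_on {0..s}" for s
    using jumarie_kernel_integrable[OF assms(1) continuous_on_add[OF assms(2,3)]] .
  ultimately show ?thesis
    unfolding has_jumarie_derivative_def by blast
qed

theorem mainTheorem1:
  fixes \<alpha> t0 :: real and u1 u2 u1' u2' D1 :: "real \<Rightarrow> real"
  assumes "0 < \<alpha>" "\<alpha> < 1"
    and "\<And>t. t \<ge> 0 \<Longrightarrow> (u1 has_real_derivative u1' t) (at t within {0..})"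
    and "continuous_on {0..} u1'"
    and "\<And>t. t \<ge> 0 \<Longrightarrow> (u2 has_real_derivative u2' t) (at t within {0..})"
    and "continuous_on {0..} u2'"
    and "t0 > 0" "u1 t0 = u2 t0" "u1' t0 \<noteq> u2' t0"
    and "\<And>t. t > 0 \<Longrightarrow> has_jumarie_derivative \<alpha> u1 (D1 t) t"
    and "continuous_on {0<..} D1"
  shows "has_jumarie_derivative \<alpha> (\<lambda>t. if t \<le> t0 then u1 t else u2 t) (D1 t0) t0"
proof -
  define h where "h x = (if x \<le> t0 then 0 else u2 x - u1 x)" for x
  have u1_cont: "continuous_on {0..} u1" and u2_cont: "continuous_on {0..} u2"
    using assms(3,5) by (auto simp: continuous_on_eq_continuous_within intro!: DERIV_continuous)
  have h_cont: "continuous_on {0..} h"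
    unfolding h_def[abs_def] using assms(8)
    by (intro continuous_on_cutoff_left continuous_on_diff u1_cont u2_cont) auto
  have diff_deriv: "((\<lambda>x. u2 x - u1 x) has_real_derivative u2' x - u1' x) (at x within {t0..t0+1})"
    if "x \<in> {t0..t0+1}" for x
    using that assms(7) by (intro derivative_intros has_field_derivative_subset[OF assms(5)]
        has_field_derivative_subset[OF assms(3)]) auto
  have diff_deriv_cont: "continuous_on {t0..t0+1} (\<lambda>x. u2' x - u1' x)"
    using assms(7) by (intro continuous_intros continuous_on_subset[OF assms(4)]
        continuous_on_subset[OF assms(6)]) auto
  obtain M where M: "\<And>x. x \<in> {t0..t0+1} \<Longrightarrow> \<bar>u2 x - u1 x\<bar> \<le> M * (x - t0)"
    by (rule vanishing_C1_linear_bound[OF diff_deriv diff_deriv_cont]) (use assms(8) in auto)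
  have h_left: "h x = 0" if "x \<le> t0" for x
    using that by (simp add: h_def)
  have h_right: "\<bar>h x\<bar> \<le> M * (x - t0)" if "x \<in> {t0..t0+1}" for x
    using M[OF that] that by (cases "x = t0") (auto simp: h_def)
  have "(jumarie_integral \<alpha> h has_real_derivative 0) (at t0)"
    using assms(7) by (intro jumarie_integral_has_derivative_zero[OF assms(2) _ _ h_cont h_left h_right]) auto
  then have "has_jumarie_derivative \<alpha> (\<lambda>x. u1 x + h x) (D1 t0 + 0) t0"
    by (rule has_jumarie_derivative_add[OF assms(2) u1_cont h_cont assms(10)[OF assms(7)]
          has_field_derivative_at_within])
  moreover have "(\<lambda>t. if t \<le> t0 then u1 t else u2 t) = (\<lambda>x. u1 x + h x)"
    by (auto simp: h_def)
  ultimately show ?thesis by simp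
qed

end
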